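(* Let $R$ be a finite commutative unital ring, $N\ge2$ with $N\in R^{\times}$, and $q\in R$ a root of the $N$-th cyclotomic polynomial over $\mathbb{Z}$. Let $\alpha$ be the exponent of $R^{\times}$ and $k$ the integer with $\alpha=kN$. Let $u,u'\in R^{\times}$, $a,a'\in R$. If $\mathrm{Id}_{H_N^q}(\mathcal{B}_{(u,a)})=\mathrm{Id}_{H_N^q}(\mathcal{B}_{(u',a')})$, then $(u')^k=u^k$.
   Context: $N$ divides $\alpha$ under these hypotheses. $H_N^q$ is the Taft Hopf algebra over $R$: generated by $g,x$ with $g^N=1$, $x^N=0$, $xg=qgx$, $\Delta(g)=g\otimes g$, $\Delta(x)=1\otimes x+x\otimes g$, $\varepsilon(g)=1$, $\varepsilon(x)=0$, free over $R$ with basis $\{g^mx^n:0\le m,n<N\}$. For $u\in R^{\times},a\in R$, $\mathcal{B}_{(u,a)}$ is the $R$-algebra generated by $v_g,v_x$ with $v_g^N=u$, $v_x^N=a$, $v_xv_g=qv_gv_x$, a right $H_N^q$-comodule algebra via $v_g\mapsto v_g\otimes g$, $v_x\mapsto1\otimes x+v_x\otimes g$. Let $Z_i^H$ ($i\ge1$) be copies $\{Z_i^h:h\in H_N^q\}$ of the $R$-module $H_N^q$ and $T=T(\bigoplus_iZ_i^H)$ the tensor algebra with coaction $\delta(Z_i^h)=\sum Z_i^{h_1}\otimes h_2$. $P\in T$ is a polynomial $H_N^q$-identity for a right $H_N^q$-comodule algebra $B$ if $f(P)=0$ for all right $H_N^q$-comodule algebra maps $f:T\to B$; $\mathrm{Id}_{H_N^q}(B)$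 is the set of these. *)

theory Defs
  imports Complex_Main "HOL-Computational_Algebra.Polynomial"
begin

definition cyclotomic :: "nat \<Rightarrow> int poly" where
  "cyclotomic n = (THE p. map_poly (of_int :: int \<Rightarrow> complex) p =
     (\<Prod>k\<in>{k. k < n \<and> coprime k n}. [:- cis (2 * pi * real k / real n), 1:]))"

definition unit_exponent :: "'a::{comm_ring_1,finite} itself \<Rightarrow> nat" where
  "unit_exponent _ = (LEAST e. 0 < e \<and> (\<forall>x::'a. x dvd 1 \<longrightarrow> x ^ e = 1))"

text \<open>An element of a free R-module with basis indexed by pairs (m,n) in Idx N is a
function (nat*nat) => R vanishing outside Idx N.\<close>

definition Idx :: "nat \<Rightarrow> (nat \<times> nat) set" where
  "Idx N = {..<N} \<times> {..<N}"

definition bas :: "'i \<Rightarrow> 'i \<Rightarrow> 'a::comm_ring_1" where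
  "bas i = (\<lambda>k. if k = i then 1 else 0)"

text \<open>Structure constants of B_(u,a) in the basis v_g^m v_x^n:
 (v_g^m v_x^n)(v_g^m' v_x^n') = q^(n m') u^((m+m') div N) a^((n+n') div N)
   v_g^((m+m') mod N) v_x^((n+n') mod N).
 The Taft algebra H_N^q is the case u = 1, a = 0 (g = v_g, x = v_x).\<close>

definition bconst :: "nat \<Rightarrow> 'a::comm_ring_1 \<Rightarrow> 'a \<Rightarrow> 'a \<Rightarrow>
    nat \<times> nat \<Rightarrow> nat \<times> nat \<Rightarrow> nat \<times> nat \<Rightarrow> 'a" where
  "bconst N q u a i j k = (case i of (m, n) \<Rightarrow> case j of (m', n') \<Rightarrow>
     if k = ((m + m') mod N, (n + n') mod N)
     then q ^ (n * m') * u ^ ((m + m') div N) * a ^ ((n + n') div N) else 0)"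

definition algmul :: "nat \<Rightarrow> (nat \<times> nat \<Rightarrow> nat \<times> nat \<Rightarrow> nat \<times> nat \<Rightarrow> 'a::comm_ring_1) \<Rightarrow>
    (nat \<times> nat \<Rightarrow> 'a) \<Rightarrow> (nat \<times> nat \<Rightarrow> 'a) \<Rightarrow> (nat \<times> nat \<Rightarrow> 'a)" where
  "algmul N c x y = (\<lambda>k. \<Sum>i\<in>Idx N. \<Sum>j\<in>Idx N. x i * y j * c i j k)"

text \<open>Tensor product of two such algebras (basis: pairs of basis indices).\<close>

definition tmul :: "nat \<Rightarrow> (nat \<times> nat \<Rightarrow> nat \<times> nat \<Rightarrow> nat \<times> nat \<Rightarrow> 'a::comm_ring_1) \<Rightarrow>
    (nat \<times> nat \<Rightarrow> nat \<times> nat \<Rightarrow> nat \<times> nat \<Rightarrow> 'a) \<Rightarrow>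
    ((nat \<times> nat) \<times> (nat \<times> nat) \<Rightarrow> 'a) \<Rightarrow> ((nat \<times> nat) \<times> (nat \<times> nat) \<Rightarrow> 'a) \<Rightarrow>
    ((nat \<times> nat) \<times> (nat \<times> nat) \<Rightarrow> 'a)" where
  "tmul N c1 c2 X Y = (\<lambda>(k, l). \<Sum>p\<in>Idx N \<times> Idx N. \<Sum>p'\<in>Idx N \<times> Idx N.
      X p * Y p' * c1 (fst p) (fst p') k * c2 (snd p) (snd p') l)"

text \<open>Image of the basis element v_g^m v_x^n under the algebra map determined by
 v_g |-> v_g (x) g and v_x |-> 1 (x) x + v_x (x) g, computed in B (x) H as
 (v_g (x) g)^m (1 (x) x + v_x (x) g)^n.  For c = structure constants of H this is the
 comultiplication Delta(g^m x^n) = Delta(g)^m Delta(x)^n.\<close>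

definition gen_coact :: "nat \<Rightarrow> 'a::comm_ring_1 \<Rightarrow>
    (nat \<times> nat \<Rightarrow> nat \<times> nat \<Rightarrow> nat \<times> nat \<Rightarrow> 'a) \<Rightarrow>
    nat \<times> nat \<Rightarrow> ((nat \<times> nat) \<times> (nat \<times> nat) \<Rightarrow> 'a)" where
  "gen_coact N q c i =
    (let mu = tmul N c (bconst N q 1 0);
         one = bas ((0, 0), (0, 0));
         G = bas ((1, 0), (1, 0));
         X = (\<lambda>p. bas ((0, 0), (0, 1)) p + bas ((0, 1), (1, 0)) p)
     in mu ((mu G ^^ fst i) one) ((mu X ^^ snd i) one))"

definition taft_Delta :: "nat \<Rightarrow> 'a::comm_ring_1 \<Rightarrow> nat \<times> nat \<Rightarrow>
    ((nat \<times> nat) \<times> (nat \<times> nat) \<Rightarrow> 'a)" where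
  "taft_Delta N q i = gen_coact N q (bconst N q 1 0) i"

definition B_coact :: "nat \<Rightarrow> 'a::comm_ring_1 \<Rightarrow> 'a \<Rightarrow> 'a \<Rightarrow> (nat \<times> nat \<Rightarrow> 'a) \<Rightarrow>
    ((nat \<times> nat) \<times> (nat \<times> nat) \<Rightarrow> 'a)" where
  "B_coact N q u a y = (\<lambda>p. \<Sum>i\<in>Idx N. y i * gen_coact N q (bconst N q u a) i p)"

text \<open>An R-linear map psi : H_N^q -> B_(u,a), given by its values psi i on the basis
 elements g^m x^n (i = (m,n)), is a right H-comodule map iff
 delta_B (psi h) = (psi (x) id) (Delta h) for all basis elements h.\<close>

definition comod_map :: "nat \<Rightarrow> 'a::comm_ring_1 \<Rightarrow> 'a \<Rightarrow> 'a \<Rightarrow>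
    (nat \<times> nat \<Rightarrow> nat \<times> nat \<Rightarrow> 'a) \<Rightarrow> bool" where
  "comod_map N q u a psi \<longleftrightarrow>
     (\<forall>j k. k \<notin> Idx N \<longrightarrow> psi j k = 0) \<and>
     (\<forall>i\<in>Idx N. B_coact N q u a (psi i) =
        (\<lambda>(k, l). \<Sum>j\<in>Idx N. taft_Delta N q i (j, l) * psi j k))"

text \<open>T is the free R-algebra on the letters Z_i^{b} (i >= 1, b a basis index of H);
 an element is a finitely supported function from words to R.\<close>

definition T_carrier :: "nat \<Rightarrow> ((nat \<times> (nat \<times> nat)) list \<Rightarrow> 'a::comm_ring_1) set" where
  "T_carrier N = {P. finite {w. P w \<noteq> 0} \<and>
      (\<forall>w. P w \<noteq> 0 \<longrightarrow> (\<forall>z\<in>set w. 1 \<le> fst z \<and> snd z \<in> Idx N))}"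

definition word_val :: "nat \<Rightarrow> (nat \<times> nat \<Rightarrow> nat \<times> nat \<Rightarrow> nat \<times> nat \<Rightarrow> 'a::comm_ring_1) \<Rightarrow>
    (nat \<Rightarrow> nat \<times> nat \<Rightarrow> nat \<times> nat \<Rightarrow> 'a) \<Rightarrow> (nat \<times> (nat \<times> nat)) list \<Rightarrow> (nat \<times> nat \<Rightarrow> 'a)" where
  "word_val N c phi w = foldr (\<lambda>z acc. algmul N c (phi (fst z) (snd z)) acc) w (bas (0, 0))"

definition T_eval :: "nat \<Rightarrow> (nat \<times> nat \<Rightarrow> nat \<times> nat \<Rightarrow> nat \<times> nat \<Rightarrow> 'a::comm_ring_1) \<Rightarrow>
    (nat \<Rightarrow> nat \<times> nat \<Rightarrow> nat \<times> nat \<Rightarrow> 'a) \<Rightarrow> ((nat \<times> (nat \<times> nat)) list \<Rightarrow> 'a) \<Rightarrow> (nat \<times> nat \<Rightarrow> 'a)" where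
  "T_eval N c phi P = (\<lambda>k. \<Sum>w\<in>{w. P w \<noteq> 0}. P w * word_val N c phi w k)"

text \<open>Comodule algebra maps f : T -> B_(u,a) correspond exactly to families
 (phi i)_{i>=1} of comodule maps H -> B_(u,a), via f(Z_i^h) = phi_i(h).\<close>

definition taft_Id :: "nat \<Rightarrow> 'a::comm_ring_1 \<Rightarrow> 'a \<Rightarrow> 'a \<Rightarrow>
    ((nat \<times> (nat \<times> nat)) list \<Rightarrow> 'a) set" where
  "taft_Id N q u a = {P \<in> T_carrier N. \<forall>phi. (\<forall>i. comod_map N q u a (phi i)) \<longrightarrow>
      T_eval N (bconst N q u a) phi P = (\<lambda>_. 0)}"

end

theory Submission
  imports Defs "HOL-Computational_Algebra.Fundamental_Theorem_Algebra"
begin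

text \<open>Write \<open>\<alpha> = k N\<close>. As \<open>N\<close> is invertible, the root \<open>q\<close> of \<open>\<Phi>\<^sub>N\<close> has order exactly \<open>N\<close>, so \<open>N\<close>
  divides \<open>\<alpha>\<close>. Every comodule map \<open>H \<rightarrow> \<B>\<^bsub>(u,a)\<^esub>\<close> sends \<open>g\<close> to some \<open>r v\<^sub>g\<close>, hence
  \<open>(Z\<^sup>g)\<^sup>n\<close> to \<open>r\<^sup>n u\<^bsup>n/N\<^esup>\<close> when \<open>N\<close> divides \<open>n\<close>. In a finite ring \<open>r\<^bsup>n+\<alpha>\<^esup> = r\<^sup>n\<close> for all \<open>r\<close>
  once \<open>n\<close> is large, so \<open>(Z\<^sub>1\<^sup>g)\<^bsup>n+\<alpha>\<^esup> - u\<^sup>k (Z\<^sub>1\<^sup>g)\<^sup>n\<close> is an identity of \<open>\<B>\<^bsub>(u,a)\<^esub>\<close>.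
  Evaluated in \<open>\<B>\<^bsub>(u',a')\<^esub>\<close> at the comodule map \<open>g\<^sup>m x\<^sup>n \<mapsto> v\<^sub>g\<^sup>m v\<^sub>x\<^sup>n\<close> it yields
  \<open>u'\<^bsup>n/N\<^esup> (u'\<^sup>k - u\<^sup>k) = 0\<close>.\<close>

section \<open>Integer polynomials\<close>

lemma map_poly_of_int_add [simp]:
  "map_poly (of_int :: int \<Rightarrow> 'a::comm_ring_1) (p + q) = map_poly of_int p + map_poly of_int q"
  by (rule poly_eqI) (simp add: coeff_map_poly)

lemma map_poly_of_int_diff [simp]:
  "map_poly (of_int :: int \<Rightarrow> 'a::comm_ring_1) (p - q) = map_poly of_int p - map_poly of_int q"
  by (rule poly_eqI) (simp add: coeff_map_poly)

lemma map_poly_of_int_mult [simp]: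
  "map_poly (of_int :: int \<Rightarrow> 'a::comm_ring_1) (p * q) = map_poly of_int p * map_poly of_int q"
  by (rule poly_eqI) (simp add: coeff_map_poly coeff_mult of_int_sum)

lemma map_poly_of_int_X [simp]: "map_poly (of_int :: int \<Rightarrow> 'a::comm_ring_1) [:0, 1:] = [:0, 1:]"
  by (simp add: map_poly_pCons)

lemma map_poly_of_int_power [simp]:
  "map_poly (of_int :: int \<Rightarrow> 'a::comm_ring_1) (p ^ n) = map_poly of_int p ^ n"
  by (induction n) simp_all

lemma map_poly_of_int_prod [simp]:
  "map_poly (of_int :: int \<Rightarrow> 'a::comm_ring_1) (prod f A) = (\<Prod>x\<in>A. map_poly of_int (f x))"
  by (induction A rule: infinite_finite_induct) simp_all

lemma map_poly_of_int_sum [simp]: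
  "map_poly (of_int :: int \<Rightarrow> 'a::comm_ring_1) (sum f A) = (\<Sum>x\<in>A. map_poly of_int (f x))"
  by (induction A rule: infinite_finite_induct) simp_all

lemma map_poly_of_int_eq_iff [simp]:
  "map_poly (of_int :: int \<Rightarrow> 'a::{comm_ring_1,ring_char_0}) p = map_poly of_int q \<longleftrightarrow> p = q"
  by (metis coeff_map_poly of_int_0 of_int_eq_iff poly_eqI)

lemma degree_map_poly_of_int [simp]:
  "degree (map_poly (of_int :: int \<Rightarrow> 'a::{comm_ring_1,ring_char_0}) p) = degree p"
  by (rule degree_map_poly) simp

lemma lead_coeff_map_poly_of_int [simp]:
  "lead_coeff (map_poly (of_int :: int \<Rightarrow> 'a::{comm_ring_1,ring_char_0}) p) = of_int (lead_coeff p)"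
  by (simp add: coeff_map_poly)

text \<open>Pseudo-division by a monic polynomial is exact, and its remainder must vanish for degree
  reasons.\<close>

lemma integral_quotient_by_monic:
  fixes A B :: "int poly" and C :: "complex poly"
  assumes monic: "lead_coeff B = 1" and eq: "map_poly of_int A = map_poly of_int B * C"
  shows "\<exists>c. map_poly of_int c = C"
proof -
  let ?m = "map_poly (of_int :: int \<Rightarrow> complex)"
  have B0: "B \<noteq> 0" using monic by auto
  obtain Q R where QR: "pseudo_divmod A B = (Q, R)" by (cases "pseudo_divmod A B")
  have "A = B * Q + R" using pseudo_divmod(1)[OF B0 QR] monic by simp
  hence rem: "?m B * (C - ?m Q) = ?m R" using eq by (simp add: algebra_simps)
  have deg_R: "R = 0 \<or> degree R < degree B" using pseudo_divmod(2)[OF B0 QR] .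
  show ?thesis
  proof (rule ccontr)
    assume "\<nexists>c. ?m c = C"
    hence "C - ?m Q \<noteq> 0" by auto
    moreover have "?m B \<noteq> 0" using B0 by (metis map_poly_0 map_poly_of_int_eq_iff)
    ultimately have "degree (?m B * (C - ?m Q)) = degree B + degree (C - ?m Q)"
      and "?m B * (C - ?m Q) \<noteq> 0"
      by (simp_all add: degree_mult_eq)
    hence "degree B \<le> degree R" "R \<noteq> 0" using rem by auto
    thus False using deg_R by simp
  qed
qed

section \<open>Cyclotomic polynomials\<close>

definition complex_cyclotomic :: "nat \<Rightarrow> complex poly" where
  "complex_cyclotomic n = (\<Prod>k | k < n \<and> coprime k n. [:- cis (2 * pi * real k / real n), 1:])"

lemma lead_coeff_complex_cyclotomic: "lead_coeff (complex_cyclotomic n) = 1"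
  unfolding complex_cyclotomic_def lead_coeff_prod by simp

lemma X_power_minus_one_eq_prod_roots_unity:
  assumes n: "n > 0"
  shows "([:0, 1:] ^ n - 1 :: complex poly) = (\<Prod>k<n. [:- cis (2 * pi * real k / real n), 1:])"
proof -
  define p where "p = ([:0, 1:] ^ n - 1 :: complex poly)"
  have poly_p: "poly p z = z ^ n - 1" for z by (simp add: p_def)
  have deg: "degree p = n"
  proof -
    have "p = [:0, 1:] ^ n + (- 1)" by (simp add: p_def)
    also have "degree \<dots> = degree ([:0, 1:] ^ n :: complex poly)"
      using n by (intro degree_add_eq_left) (simp add: degree_linear_power)
    finally show ?thesis by (simp add: degree_linear_power)
  qed
  have lead: "lead_coeff p = 1"
    using deg n by (simp add: p_def coeff_linear_power)
  have "pderiv p = smult (of_nat n) ([:0, 1:] ^ (n - 1))"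
    using n unfolding p_def
    by (cases n) (simp_all del: power_Suc add: pderiv_diff pderiv_power_Suc pderiv_pCons)
  hence "rsquarefree p"
    using n by (auto simp: rsquarefree_roots poly_p power_0_left)
  hence "p = smult (lead_coeff p) (\<Prod>z | poly p z = 0. [:- z, 1:])"
    by (rule complex_poly_decompose_rsquarefree[symmetric])
  also have "\<dots> = (\<Prod>z \<in> {z. z ^ n = 1}. [:- z, 1:])" using lead by (simp add: poly_p)
  also have "\<dots> = (\<Prod>k<n. [:- cis (2 * pi * real k / real n), 1:])"
    by (rule prod.reindex_bij_betw[OF bij_betw_roots_unity[OF n], symmetric])
  finally show ?thesis by (simp add: p_def)
qed

lemma prod_roots_unity_by_order:
  fixes f :: "complex \<Rightarrow> 'b::comm_monoid_mult"
  assumes n: "n > 0"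
  shows "(\<Prod>k<n. f (cis (2 * pi * real k / real n))) =
         (\<Prod>d | d dvd n. \<Prod>k | k < d \<and> coprime k d. f (cis (2 * pi * real k / real d)))"
proof -
  let ?S = "Sigma {d. d dvd n} (\<lambda>d. {k. k < d \<and> coprime k d})"
  have "(\<Prod>d | d dvd n. \<Prod>k | k < d \<and> coprime k d. f (cis (2 * pi * real k / real d)))
      = (\<Prod>(d, j)\<in>?S. f (cis (2 * pi * real j / real d)))"
    using n by (subst prod.Sigma) auto
  also have "\<dots> = (\<Prod>k<n. f (cis (2 * pi * real k / real n)))"
    \<comment> \<open>write \<open>k / n\<close> in lowest terms \<open>j / d\<close>\<close>
  proof (rule prod.reindex_bij_witness[where i = "\<lambda>k. (n div gcd k n, k div gcd k n)"
        and j = "\<lambda>(d, j). j * (n div d)"])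
    fix p assume "p \<in> ?S"
    then obtain d j where p: "p = (d, j)" and "d dvd n" "j < d" "coprime j d" by auto
    then obtain e where e: "n = d * e" by blast
    have "d > 0" "e > 0" using n e by auto
    have ne: "n div d = e" "n div e = d" using e \<open>d > 0\<close> \<open>e > 0\<close> by auto
    have "gcd (j * e) n = gcd (e * j) (e * d)" by (simp only: e mult.commute)
    also have "\<dots> = e" using \<open>coprime j d\<close> by (simp add: gcd_mult_distrib_nat[symmetric])
    finally have g: "gcd (j * e) n = e" .
    show "(\<lambda>k. (n div gcd k n, k div gcd k n)) ((\<lambda>(d, j). j * (n div d)) p) = p"
      using \<open>e > 0\<close> by (simp add: p ne g)
    show "(\<lambda>(d, j). j * (n div d)) p \<in> {..<n}"
      using \<open>j < d\<close> \<open>e > 0\<close> by (simp add: p ne e)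
    have "2 * pi * real (j * e) / real n = 2 * pi * real j / real d"
      using \<open>d > 0\<close> \<open>e > 0\<close> by (simp add: e field_simps)
    thus "f (cis (2 * pi * real ((\<lambda>(d, j). j * (n div d)) p) / real n)) =
        (case p of (d, j) \<Rightarrow> f (cis (2 * pi * real j / real d)))"
      by (simp only: p ne prod.case)
  next
    fix k assume k: "k \<in> {..<n}"
    obtain g where g: "gcd k n = g" by blast
    obtain m j where m: "n = g * m" and j: "k = g * j"
      using g by (metis gcd_dvd1 gcd_dvd2 dvdE)
    have "g > 0" "m > 0" using n m g by auto
    have gm: "k div g = j" "n div g = m" "n div m = g"
      using m j \<open>g > 0\<close> \<open>m > 0\<close> by simp_all
    show "(\<lambda>(d, j). j * (n div d)) (n div gcd k n, k div gcd k n) = k"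
      by (simp only: g gm prod.case) (simp add: j)
    have "coprime (k div g) (n div g)"
      unfolding g[symmetric] using n by (intro div_gcd_coprime) auto
    moreover have "k div g < n div g" using k \<open>g > 0\<close> by (simp add: m j)
    ultimately show "(n div gcd k n, k div gcd k n) \<in> ?S"
      by (simp add: g gm) (simp add: m)
  qed
  finally show ?thesis ..
qed

lemma X_power_minus_one_eq_prod_complex_cyclotomic:
  assumes n: "n > 0"
  shows "([:0, 1:] ^ n - 1 :: complex poly) = (\<Prod>d | d dvd n. complex_cyclotomic d)"
  unfolding X_power_minus_one_eq_prod_roots_unity[OF n] complex_cyclotomic_def
  by (rule prod_roots_unity_by_order[OF n, where f = "\<lambda>z. [:- z, 1:]"])

lemma complex_cyclotomic_integral: "n > 0 \<Longrightarrow> \<exists>p. map_poly of_int p = complex_cyclotomic n"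
proof (induction n rule: less_induct)
  case (less n)
  define D where "D = {d. d dvd n \<and> d \<noteq> n}"
  have "finite D" using less.prems by (auto simp: D_def)
  have "\<exists>p. map_poly of_int p = complex_cyclotomic d" if "d \<in> D" for d
  proof (rule less.IH)
    show "d < n" "d > 0" using that less.prems by (auto simp: D_def intro: dvd_pos_nat dest: dvd_imp_le)
  qed
  then obtain P where P: "\<And>d. d \<in> D \<Longrightarrow> map_poly of_int (P d) = complex_cyclotomic d"
    by metis
  have "lead_coeff (P d) = 1" if "d \<in> D" for d
    using lead_coeff_map_poly_of_int[of "P d", where 'a = complex] P[OF that]
    by (simp add: lead_coeff_complex_cyclotomic)
  hence monic: "lead_coeff (\<Prod>d\<in>D. P d) = 1" by (simp add: lead_coeff_prod)
  have "{d. d dvd n} = insert n D" by (auto simp: D_def)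
  hence "map_poly of_int ([:0, 1:] ^ n - 1) = map_poly of_int (\<Prod>d\<in>D. P d) * complex_cyclotomic n"
    using X_power_minus_one_eq_prod_complex_cyclotomic[OF less.prems] \<open>finite D\<close> P
    by (simp add: D_def mult.commute)
  thus ?case by (rule integral_quotient_by_monic[OF monic])
qed

lemma map_poly_of_int_cyclotomic:
  assumes "n > 0"
  shows "map_poly of_int (cyclotomic n) = complex_cyclotomic n"
proof -
  obtain p where p: "map_poly of_int p = complex_cyclotomic n"
    using complex_cyclotomic_integral[OF assms] by blast
  have "cyclotomic n = p"
    unfolding cyclotomic_def complex_cyclotomic_def[symmetric]
    by (rule the1_equality[OF ex1I[of _ p]]) (use p in \<open>metis map_poly_of_int_eq_iff\<close>)+
  with p show ?thesis by simp
qed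

lemma X_power_minus_one_eq_prod_cyclotomic:
  assumes n: "n > 0"
  shows "([:0, 1:] ^ n - 1 :: int poly) = (\<Prod>d | d dvd n. cyclotomic d)"
proof -
  have "map_poly (of_int :: int \<Rightarrow> complex) (\<Prod>d | d dvd n. cyclotomic d) =
      (\<Prod>d | d dvd n. complex_cyclotomic d)"
    unfolding map_poly_of_int_prod using n
    by (intro prod.cong refl map_poly_of_int_cyclotomic) (auto intro: dvd_pos_nat)
  also have "\<dots> = map_poly of_int ([:0, 1:] ^ n - 1)"
    by (simp add: X_power_minus_one_eq_prod_complex_cyclotomic[OF n])
  finally have "(\<Prod>d | d dvd n. cyclotomic d) = [:0, 1:] ^ n - 1"
    by (simp only: map_poly_of_int_eq_iff)
  thus ?thesis ..
qed

lemma cyclotomic_root_power_eq_1: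
  fixes q :: "'a::comm_ring_1"
  assumes N: "N > 0" and root: "poly (map_poly of_int (cyclotomic N)) q = 0"
  shows "q ^ N = 1"
proof -
  have "([:0, 1:] ^ N - 1 :: int poly) = cyclotomic N * (\<Prod>e \<in> {e. e dvd N} - {N}. cyclotomic e)"
    using N by (simp add: X_power_minus_one_eq_prod_cyclotomic prod.remove[of _ N])
  hence "poly (map_poly (of_int :: int \<Rightarrow> 'a) ([:0, 1:] ^ N - 1)) q = 0"
    using root by simp
  thus ?thesis by simp
qed

text \<open>\<open>X\<^sup>N - 1 = (X\<^sup>d - 1) \<Phi>\<^sub>N H\<close> and \<open>X\<^sup>N - 1 = (X\<^sup>d - 1) (1 + X\<^sup>d + \<dots> + X\<^bsup>d(m-1)\<^esup>)\<close> with
  \<open>N = d m\<close>, so if \<open>q\<^sup>d = 1\<close> then evaluating at \<open>q\<close> gives \<open>0 = m\<close>, whence \<open>N = 0\<close> in \<open>R\<close>.\<close>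

lemma cyclotomic_root_proper_power_ne_1:
  fixes q :: "'a::comm_ring_1"
  assumes N: "N > 0" and root: "poly (map_poly of_int (cyclotomic N)) q = 0"
    and N_unit: "of_nat N dvd (1::'a)" and nontrivial: "(0::'a) \<noteq> 1"
    and d: "d dvd N" "d < N"
  shows "q ^ d \<noteq> 1"
proof
  assume qd: "q ^ d = 1"
  obtain m where m: "N = d * m" using d by blast
  have "d > 0" using d N by (auto intro: dvd_pos_nat)
  define H where "H = (\<Prod>e \<in> {e. e dvd N} - {e. e dvd d} - {N}. cyclotomic e)"
  have fin: "finite {e. e dvd N}" using N by simp
  have sub: "{e. e dvd d} \<subseteq> {e. e dvd N}" using d by auto
  have "N \<notin> {e. e dvd d}" using d \<open>d > 0\<close> by (auto dest: dvd_imp_le)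
  have "(\<Prod>e \<in> {e. e dvd N}. cyclotomic e) =
      (\<Prod>e | e dvd d. cyclotomic e) * (\<Prod>e \<in> {e. e dvd N} - {e. e dvd d}. cyclotomic e)"
    using prod.subset_diff[OF sub fin] by (simp add: mult.commute)
  also have "(\<Prod>e \<in> {e. e dvd N} - {e. e dvd d}. cyclotomic e) = cyclotomic N * H"
    unfolding H_def using fin \<open>N \<notin> {e. e dvd d}\<close> by (subst prod.remove[of _ N]) auto
  finally have "([:0, 1:] ^ N - 1 :: int poly) = ([:0, 1:] ^ d - 1) * (cyclotomic N * H)"
    using N \<open>d > 0\<close> by (simp add: X_power_minus_one_eq_prod_cyclotomic)
  moreover have "([:0, 1:] ^ N - 1 :: int poly) = ([:0, 1:] ^ d - 1) * (\<Sum>i<m. ([:0, 1:] ^ d) ^ i)"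
    unfolding m power_mult by (rule power_diff_1_eq)
  moreover have "poly ([:0, 1:] ^ d - 1 :: int poly) 0 = - 1" using \<open>d > 0\<close> by simp
  hence "([:0, 1:] ^ d - 1 :: int poly) \<noteq> 0" by (metis poly_0 neg_equal_0_iff_equal zero_neq_one)
  ultimately have "cyclotomic N * H = (\<Sum>i<m. ([:0, 1:] ^ d) ^ i)" by simp
  hence "poly (map_poly (of_int :: int \<Rightarrow> 'a) (cyclotomic N * H)) q =
      poly (map_poly of_int (\<Sum>i<m. ([:0, 1:] ^ d) ^ i)) q" by simp
  hence "of_nat m = (0::'a)" using root qd by (simp add: poly_sum)
  hence "of_nat N = (0::'a)" by (simp add: m)
  thus False using N_unit nontrivial by simp
qed

section \<open>The exponent of the unit group\<close>

lemma unit_mult_left_cancel_comm: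
  fixes a b c :: "'a::comm_monoid_mult"
  assumes "a dvd 1" and "a * b = a * c"
  shows "b = c"
proof -
  obtain a' where a': "1 = a * a'" using assms(1) by (rule dvdE)
  have "b = (a * a') * b" using a' by simp
  also have "\<dots> = a' * (a * b)" by (simp only: ac_simps)
  also have "\<dots> = a' * (a * c)" by (simp only: assms(2))
  also have "\<dots> = (a * a') * c" by (simp only: ac_simps)
  also have "\<dots> = c" using a' by simp
  finally show ?thesis .
qed

lemma power_gcd_eq_1:
  fixes q :: "'a::monoid_mult"
  shows "q ^ a = 1 \<Longrightarrow> q ^ b = 1 \<Longrightarrow> q ^ gcd a b = 1"
proof (induction a b rule: gcd_nat_induct)
  case (step m n)
  have "q ^ m = (q ^ n) ^ (m div n) * q ^ (m mod n)"
    by (simp only: power_mult[symmetric] power_add[symmetric] mult_div_mod_eq)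
  hence "q ^ (m mod n) = 1" using step by simp
  thus ?case using step by (simp add: gcd_non_0_nat)
qed simp

lemma power_pigeonhole:
  fixes x :: "'a::{monoid_mult,finite}"
  obtains i j where "i < j" "j \<le> card (UNIV :: 'a set)" "x ^ i = x ^ j"
proof -
  have "card ((\<lambda>i. x ^ i) ` {0..card (UNIV :: 'a set)}) \<le> card (UNIV :: 'a set)" by (rule card_mono) auto
  hence "\<not> inj_on (\<lambda>i. x ^ i) {0..card (UNIV :: 'a set)}" by (intro pigeonhole) simp
  then obtain i j where "i \<le> card (UNIV :: 'a set)" "j \<le> card (UNIV :: 'a set)" "i \<noteq> j" "x ^ i = x ^ j"
    unfolding inj_on_def by auto
  thus ?thesis
  proof (cases "i < j")
    case False
    thus ?thesis using that[of j i] \<open>i \<le> _\<close> \<open>i \<noteq> j\<close> \<open>x ^ i = x ^ j\<close> by simp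
  qed (use that in simp)
qed

lemma unit_power_fact_card:
  fixes x :: "'a::{comm_semiring_1,finite}"
  assumes "x dvd 1"
  shows "x ^ fact (card (UNIV :: 'a set)) = 1"
proof -
  obtain i j where ij: "i < j" "j \<le> card (UNIV :: 'a set)" "x ^ i = x ^ j" by (rule power_pigeonhole)
  have unit: "x ^ i dvd 1" using dvd_power_same[OF assms, of i] by simp
  have "x ^ i * x ^ (j - i) = x ^ j" using ij(1) by (simp flip: power_add)
  also have "\<dots> = x ^ i * 1" using ij(3) by simp
  finally have "x ^ (j - i) = 1" by (rule unit_mult_left_cancel_comm[OF unit])
  moreover have "j - i dvd fact (card (UNIV :: 'a set))" using ij by (intro dvd_fact) auto
  then obtain c where "fact (card (UNIV :: 'a set)) = (j - i) * c" ..
  ultimately show ?thesis by (simp add: power_mult)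
qed

lemma unit_exponent_spec:
  "0 < unit_exponent TYPE('a::{comm_ring_1,finite}) \<and>
    (\<forall>x::'a. x dvd 1 \<longrightarrow> x ^ unit_exponent TYPE('a) = 1)"
proof -
  have "\<exists>e. 0 < e \<and> (\<forall>x::'a. x dvd 1 \<longrightarrow> x ^ e = 1)"
    using unit_power_fact_card by (intro exI[of _ "fact (card (UNIV :: 'a set))"]) auto
  thus ?thesis unfolding unit_exponent_def by (rule LeastI_ex)
qed

lemma unit_exponent_pos: "0 < unit_exponent TYPE('a::{comm_ring_1,finite})"
  using unit_exponent_spec by blast

lemma power_unit_exponent: "(x::'a::{comm_ring_1,finite}) dvd 1 \<Longrightarrow> x ^ unit_exponent TYPE('a) = 1"
  using unit_exponent_spec by blast

lemma dvd_unit_exponent_if_cyclotomic_root: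
  fixes q :: "'a::{comm_ring_1,finite}"
  assumes N: "N > 0" and N_unit: "of_nat N dvd (1::'a)"
    and root: "poly (map_poly of_int (cyclotomic N)) q = 0"
    and nontrivial: "(0::'a) \<noteq> 1"
  shows "N dvd unit_exponent TYPE('a)"
proof -
  have "q ^ N = 1" using N root by (rule cyclotomic_root_power_eq_1)
  hence "q dvd 1" using N by (metis dvdI power_eq_if not_gr0)
  hence "q ^ gcd (unit_exponent TYPE('a)) N = 1"
    using \<open>q ^ N = 1\<close> by (intro power_gcd_eq_1 power_unit_exponent)
  moreover have "gcd (unit_exponent TYPE('a)) N \<le> N" using N by simp
  ultimately have "gcd (unit_exponent TYPE('a)) N = N"
    using cyclotomic_root_proper_power_ne_1[OF N root N_unit nontrivial] by force
  thus ?thesis by (metis gcd_dvd1)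
qed

lemma idempotent_shift_power:
  fixes s t :: "'a::comm_ring_1"
  assumes "s * s = s" "t * s = t" "n > 0"
  shows "(t + (1 - s)) ^ n = t ^ n + (1 - s)"
  using \<open>n > 0\<close>
proof (induction n rule: nat_induct_non_zero)
  case (Suc n)
  have t1: "t * (1 - s) = 0" using assms(2) by (simp add: algebra_simps)
  have "t ^ n * (1 - s) = t ^ (n - 1) * (t * (1 - s))"
    using \<open>0 < n\<close> by (cases n) (simp_all add: ac_simps)
  hence tn: "t ^ n * (1 - s) = 0" using t1 by simp
  have s1: "(1 - s) * (1 - s) = 1 - s" using assms(1) by (simp add: algebra_simps)
  have "(t + (1 - s)) ^ Suc n = (t + (1 - s)) * (t ^ n + (1 - s))" using Suc.IH by simp
  also have "\<dots> = t ^ Suc n + t * (1 - s) + t ^ n * (1 - s) + (1 - s) * (1 - s)"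
    by (simp add: algebra_simps)
  also have "\<dots> = t ^ Suc n + (1 - s)" by (simp only: t1 tn s1) simp
  finally show ?case .
qed simp

lemma power_eventually_idempotent:
  fixes r :: "'a::{monoid_mult,finite}"
  obtains M p where "0 < p" "M \<le> card (UNIV :: 'a set) * card (UNIV :: 'a set)"
    "r ^ M * r ^ M = r ^ M" "r ^ (M + p) = r ^ M"
proof -
  let ?C = "card (UNIV :: 'a set)"
  obtain i j where ij: "i < j" "j \<le> ?C" "r ^ i = r ^ j" by (rule power_pigeonhole)
  define p where "p = j - i"
  have periodic: "r ^ (k + p * c) = r ^ k" if "i \<le> k" for k c
  proof (induction c)
    case (Suc c)
    have "k + p * Suc c = (k + p * c - i) + j" using that ij by (simp add: p_def)
    hence "r ^ (k + p * Suc c) = r ^ (k + p * c - i) * r ^ j" by (simp only: power_add)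
    also have "\<dots> = r ^ (k + p * c - i) * r ^ i" using ij(3) by simp
    also have "\<dots> = r ^ (k + p * c)" using that by (simp flip: power_add)
    finally show ?case using Suc by simp
  qed simp
  define M where "M = p * ?C"
  have "i \<le> 1 * ?C" using ij by simp
  also have "\<dots> \<le> M" unfolding M_def p_def using ij by (intro mult_le_mono1) linarith
  finally have "i \<le> M" .
  show ?thesis
  proof (rule that)
    show "0 < p" using ij by (simp add: p_def)
    show "M \<le> ?C * ?C" unfolding M_def p_def using ij by (intro mult_le_mono1) linarith
    show "r ^ M * r ^ M = r ^ M" using periodic[OF \<open>i \<le> M\<close>] by (simp add: M_def flip: power_add)
    show "r ^ (M + p) = r ^ M" using periodic[OF \<open>i \<le> M\<close>, of 1] by simp
  qed
qed

text \<open>On the ideal generated by the idempotent \<open>s = r\<^sup>M\<close> the element \<open>t = s r\<close> is invertible,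
  so \<open>t + (1 - s)\<close> is a unit of the whole ring and \<open>\<alpha>\<close> kills it.\<close>

lemma power_add_unit_exponent_if_idempotent:
  fixes r :: "'a::{comm_ring_1,finite}"
  assumes idem: "r ^ M * r ^ M = r ^ M" and periodic: "r ^ (M + p) = r ^ M" and "0 < p"
  shows "r ^ (M + unit_exponent TYPE('a)) = r ^ M"
proof -
  let ?\<alpha> = "unit_exponent TYPE('a)"
  define s where "s = r ^ M"
  define t where "t = s * r"
  have ss: "s * s = s" using idem by (simp add: s_def)
  have ts: "t * s = t" using ss by (simp add: t_def ac_simps)
  have s_power: "s ^ k = s" if "k > 0" for k
    using that by (induction k rule: nat_induct_non_zero) (simp_all add: ss)
  have "t ^ p = s * r ^ p"
    using s_power[OF \<open>p > 0\<close>] by (simp add: t_def power_mult_distrib)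
  also have "\<dots> = s" using periodic by (simp add: s_def power_add)
  finally have "(t + (1 - s)) ^ p = 1"
    using idempotent_shift_power[OF ss ts \<open>p > 0\<close>] by simp
  hence "t + (1 - s) dvd 1"
    using \<open>p > 0\<close> by (metis dvdI power_eq_if not_gr0)
  hence "(t + (1 - s)) ^ ?\<alpha> = 1" by (rule power_unit_exponent)
  hence "t ^ ?\<alpha> = s"
    using idempotent_shift_power[OF ss ts unit_exponent_pos[where 'a = 'a]] by simp
  thus ?thesis
    using s_power[OF unit_exponent_pos[where 'a = 'a]] by (simp add: t_def s_def power_mult_distrib power_add)
qed

lemma power_add_unit_exponent:
  fixes r :: "'a::{comm_ring_1,finite}"
  assumes "card (UNIV :: 'a set) * card (UNIV :: 'a set) \<le> n"
  shows "r ^ (n + unit_exponent TYPE('a)) = r ^ n"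
proof -
  obtain M p where "0 < p" "M \<le> n" "r ^ M * r ^ M = r ^ M" "r ^ (M + p) = r ^ M"
    using assms by (metis power_eventually_idempotent le_trans)
  hence "r ^ (n - M) * r ^ (M + unit_exponent TYPE('a)) = r ^ (n - M) * r ^ M"
    by (simp add: power_add_unit_exponent_if_idempotent)
  thus ?thesis using \<open>M \<le> n\<close> by (simp flip: power_add)
qed

section \<open>Coordinates in \<open>\<B> \<otimes> H\<close>\<close>

lemma finite_Idx [simp]: "finite (Idx N)"
  by (simp add: Idx_def)

lemma mem_Idx [simp]: "(m, n) \<in> Idx N \<longleftrightarrow> m < N \<and> n < N"
  by (simp add: Idx_def)

lemma bconst_no_wrap:
  assumes "m + m' < N" "n + n' < N"
  shows "bconst N q u a (m, n) (m', n') k = (if k = (m + m', n + n') then q ^ (n * m') else 0)"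
  using assms by (simp add: bconst_def)

lemma bconst_nonzero_in_Idx:
  assumes "N > 0" "bconst N q u a i j k \<noteq> 0"
  shows "k \<in> Idx N"
  using assms by (auto simp: bconst_def split: prod.splits if_splits)

abbreviation taft_const :: "nat \<Rightarrow> 'a \<Rightarrow> nat \<times> nat \<Rightarrow> nat \<times> nat \<Rightarrow> nat \<times> nat \<Rightarrow> 'a::comm_ring_1"
  where "taft_const N q \<equiv> bconst N q 1 0"

abbreviation comod_mul ::
    "nat \<Rightarrow> 'a \<Rightarrow> (nat \<times> nat \<Rightarrow> nat \<times> nat \<Rightarrow> nat \<times> nat \<Rightarrow> 'a::comm_ring_1) \<Rightarrow>
      ((nat \<times> nat) \<times> (nat \<times> nat) \<Rightarrow> 'a) \<Rightarrow> ((nat \<times> nat) \<times> (nat \<times> nat) \<Rightarrow> 'a) \<Rightarrow>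
      ((nat \<times> nat) \<times> (nat \<times> nat) \<Rightarrow> 'a)"
  where "comod_mul N q c \<equiv> tmul N c (taft_const N q)"

lemma tmul_nonzeroE:
  assumes "tmul N c1 c2 X Y (k, l) \<noteq> 0"
  obtains p p' where "X p \<noteq> 0" "Y p' \<noteq> 0" "c1 (fst p) (fst p') k \<noteq> 0" "c2 (snd p) (snd p') l \<noteq> 0"
proof -
  obtain p where "(\<Sum>p'\<in>Idx N \<times> Idx N. X p * Y p' * c1 (fst p) (fst p') k * c2 (snd p) (snd p') l) \<noteq> 0"
    using assms unfolding tmul_def by (auto elim: sum.not_neutral_contains_not_neutral)
  then obtain p' where "X p * Y p' * c1 (fst p) (fst p') k * c2 (snd p) (snd p') l \<noteq> 0"
    by (auto elim: sum.not_neutral_contains_not_neutral)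
  hence "X p \<noteq> 0" "Y p' \<noteq> 0" "c1 (fst p) (fst p') k \<noteq> 0" "c2 (snd p) (snd p') l \<noteq> 0"
    by auto
  thus ?thesis by (rule that)
qed

lemma tmul_bconst_nonzero_in_Idx:
  assumes "N > 0" "tmul N (bconst N q u a) c X Y (k, l) \<noteq> 0"
  shows "k \<in> Idx N"
  using assms(2) by (rule tmul_nonzeroE) (use bconst_nonzero_in_Idx[OF assms(1)] in blast)

lemma sum_bas_mult:
  assumes "finite S" "i \<in> S"
  shows "(\<Sum>j\<in>S. bas i j * f j) = f i"
  using assms by (simp add: bas_def if_distrib[of "\<lambda>x. x * _"] sum.delta cong: if_cong)

lemma tmul_bas_left:
  assumes "P \<in> Idx N \<times> Idx N"
  shows "tmul N c1 c2 (bas P) Y (k, l) =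
    (\<Sum>p'\<in>Idx N \<times> Idx N. Y p' * c1 (fst P) (fst p') k * c2 (snd P) (snd p') l)"
proof -
  have "tmul N c1 c2 (bas P) Y (k, l) = (\<Sum>p\<in>Idx N \<times> Idx N. bas P p *
      (\<Sum>p'\<in>Idx N \<times> Idx N. Y p' * c1 (fst p) (fst p') k * c2 (snd p) (snd p') l))"
    unfolding tmul_def by (simp add: sum_distrib_left mult.assoc)
  thus ?thesis using assms by (simp only: sum_bas_mult finite_cartesian_product finite_Idx)
qed

lemma tmul_bas_bas:
  assumes "P \<in> Idx N \<times> Idx N" "P' \<in> Idx N \<times> Idx N"
  shows "tmul N c1 c2 (bas P) (bas P') (k, l) = c1 (fst P) (fst P') k * c2 (snd P) (snd P') l"
  using assms by (simp add: tmul_bas_left mult.assoc sum_bas_mult)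

lemma tmul_add_left:
  "tmul N c1 c2 (\<lambda>p. X1 p + X2 p) Y = (\<lambda>kl. tmul N c1 c2 X1 Y kl + tmul N c1 c2 X2 Y kl)"
  unfolding tmul_def by (intro ext) (auto simp: algebra_simps sum.distrib split: prod.splits)

definition left_degree_le :: "nat \<Rightarrow> nat \<Rightarrow> ((nat \<times> nat) \<times> (nat \<times> nat) \<Rightarrow> 'a::zero) \<Rightarrow> bool" where
  "left_degree_le s t X \<longleftrightarrow> (\<forall>m n h. X ((m, n), h) \<noteq> 0 \<longrightarrow> m \<le> s \<and> n \<le> t)"

lemma left_degree_leD: "left_degree_le s t X \<Longrightarrow> X ((m, n), h) \<noteq> 0 \<Longrightarrow> m \<le> s \<and> n \<le> t"
  unfolding left_degree_le_def by blast

lemma left_degree_le_bas: "m \<le> s \<Longrightarrow> n \<le> t \<Longrightarrow> left_degree_le s t (bas ((m, n), h))"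
  unfolding left_degree_le_def bas_def by auto

text \<open>As long as the exponents of \<open>v\<^sub>g\<close> and \<open>v\<^sub>x\<close> stay below \<open>N\<close>, the structure constants of
  \<open>\<B>\<^bsub>(u,a)\<^esub>\<close> do not depend on \<open>u\<close> and \<open>a\<close>.\<close>

lemma tmul_bconst_cong:
  assumes X: "left_degree_le s1 t1 X" and Y: "left_degree_le s2 t2 Y"
    and st: "s1 + s2 < N" "t1 + t2 < N"
  shows "tmul N (bconst N q u a) c X Y = tmul N (bconst N q u' a') c X Y"
proof -
  have summand: "X ((m, n), h) * Y ((m', n'), h') * bconst N q u a (m, n) (m', n') k =
      X ((m, n), h) * Y ((m', n'), h') * bconst N q u' a' (m, n) (m', n') k" for m n h m' n' h' k
  proof (cases "X ((m, n), h) = 0 \<or> Y ((m', n'), h') = 0")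
    case False
    hence "m \<le> s1 \<and> n \<le> t1" "m' \<le> s2 \<and> n' \<le> t2"
      using left_degree_leD[OF X] left_degree_leD[OF Y] by blast+
    hence "m + m' < N" "n + n' < N" using st by linarith+
    thus ?thesis by (simp add: bconst_no_wrap)
  qed auto
  show ?thesis unfolding tmul_def
  proof (intro ext, clarify, intro sum.cong refl)
    fix k l :: "nat \<times> nat" and p p' :: "(nat \<times> nat) \<times> (nat \<times> nat)"
    obtain m n h m' n' h' where "p = ((m, n), h)" "p' = ((m', n'), h')"
      by (cases p, cases p') auto
    thus "X p * Y p' * bconst N q u a (fst p) (fst p') k * c (snd p) (snd p') l =
        X p * Y p' * bconst N q u' a' (fst p) (fst p') k * c (snd p) (snd p') l"
      using summand by simp
  qed
qed

lemma left_degree_le_tmul: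
  assumes X: "left_degree_le s1 t1 X" and Y: "left_degree_le s2 t2 Y"
    and st: "s1 + s2 < N" "t1 + t2 < N"
  shows "left_degree_le (s1 + s2) (t1 + t2) (tmul N (bconst N q u a) c X Y)"
  unfolding left_degree_le_def
proof (intro allI impI)
  fix m n h assume "tmul N (bconst N q u a) c X Y ((m, n), h) \<noteq> 0"
  then obtain p p' where "X p \<noteq> 0" "Y p' \<noteq> 0" and nz: "bconst N q u a (fst p) (fst p') (m, n) \<noteq> 0"
    by (rule tmul_nonzeroE)
  obtain m1 n1 h1 m2 n2 h2 where p: "p = ((m1, n1), h1)" "p' = ((m2, n2), h2)"
    by (cases p, cases p') auto
  have "m1 \<le> s1" "n1 \<le> t1" "m2 \<le> s2" "n2 \<le> t2"
    using left_degree_leD[OF X] left_degree_leD[OF Y] \<open>X p \<noteq> 0\<close> \<open>Y p' \<noteq> 0\<close> p by blast+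
  moreover have "(m, n) = (m1 + m2, n1 + n2)"
    using nz calculation st by (simp add: p bconst_no_wrap split: if_splits)
  ultimately show "m \<le> s1 + s2 \<and> n \<le> t1 + t2" by simp
qed

abbreviation tensor_one :: "(nat \<times> nat) \<times> (nat \<times> nat) \<Rightarrow> 'a::comm_ring_1"
  where "tensor_one \<equiv> bas ((0, 0), (0, 0))"

abbreviation coact_vg :: "(nat \<times> nat) \<times> (nat \<times> nat) \<Rightarrow> 'a::comm_ring_1"
  where "coact_vg \<equiv> bas ((1, 0), (1, 0))"

abbreviation coact_vx :: "(nat \<times> nat) \<times> (nat \<times> nat) \<Rightarrow> 'a::comm_ring_1"
  where "coact_vx \<equiv> \<lambda>p. bas ((0, 0), (0, 1)) p + bas ((0, 1), (1, 0)) p"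

lemma gen_coact_unfold:
  "gen_coact N q c i = comod_mul N q c ((comod_mul N q c coact_vg ^^ fst i) tensor_one)
      ((comod_mul N q c coact_vx ^^ snd i) tensor_one)"
  by (simp add: gen_coact_def Let_def)

lemma coact_vg_power:
  "m < N \<Longrightarrow> (comod_mul N q (bconst N q u a) coact_vg ^^ m) tensor_one = bas ((m, 0), (m, 0))"
proof (induction m)
  case (Suc m)
  show ?case
  proof (rule ext, clarify)
    fix k l :: "nat \<times> nat"
    have Idx: "((1, 0), (1, 0)) \<in> Idx N \<times> Idx N" "((m, 0), (m, 0)) \<in> Idx N \<times> Idx N"
      using Suc.prems by auto
    have "(comod_mul N q (bconst N q u a) coact_vg ^^ Suc m) tensor_one (k, l) =
        comod_mul N q (bconst N q u a) coact_vg (bas ((m, 0), (m, 0))) (k, l)"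
      using Suc by simp
    also have "\<dots> = bconst N q u a (1, 0) (m, 0) k * taft_const N q (1, 0) (m, 0) l"
      using tmul_bas_bas[OF Idx] by simp
    also have "\<dots> = bas ((Suc m, 0), (Suc m, 0)) (k, l)"
      using Suc.prems by (simp add: bconst_no_wrap bas_def)
    finally show "(comod_mul N q (bconst N q u a) coact_vg ^^ Suc m) tensor_one (k, l) =
        bas ((Suc m, 0), (Suc m, 0)) (k, l)" .
  qed
qed simp

lemma left_degree_le_coact_vx: "left_degree_le 0 1 coact_vx"
  unfolding left_degree_le_def bas_def by auto

definition taft_x_power :: "nat \<Rightarrow> 'a \<Rightarrow> nat \<Rightarrow> (nat \<times> nat) \<times> (nat \<times> nat) \<Rightarrow> 'a::comm_ring_1" where
  "taft_x_power N q n = (comod_mul N q (taft_const N q) coact_vx ^^ n) tensor_one"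

lemma left_degree_le_taft_x_power: "n < N \<Longrightarrow> left_degree_le 0 n (taft_x_power N q n)"
proof (induction n)
  case 0
  show ?case by (simp add: taft_x_power_def left_degree_le_bas)
next
  case (Suc n)
  from left_degree_le_tmul[OF left_degree_le_coact_vx Suc.IH] Suc.prems show ?case
    by (simp add: taft_x_power_def)
qed

lemma coact_vx_power:
  "n < N \<Longrightarrow> (comod_mul N q (bconst N q u a) coact_vx ^^ n) tensor_one = taft_x_power N q n"
proof (induction n)
  case (Suc n)
  from tmul_bconst_cong[OF left_degree_le_coact_vx left_degree_le_taft_x_power[where q = q]] Suc show ?case
    by (simp add: taft_x_power_def)
qed (simp add: taft_x_power_def)

lemma tmul_bas_left_slice:
  assumes Y: "left_degree_le 0 t Y" and "t < N" "m < N" "h \<in> Idx N"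
  shows "tmul N (bconst N q u a) c (bas ((m, 0), h)) Y ((m', 0), l) =
    (if m' = m then \<Sum>h'\<in>Idx N. Y ((0, 0), h') * c h h' l else 0)"
proof -
  have summand: "Y p' * bconst N q u a (m, 0) (fst p') (m', 0) * c h (snd p') l =
      (if fst p' = (0, 0) \<and> m' = m then Y p' * c h (snd p') l else 0)" for p'
  proof (cases "Y p' = 0")
    case False
    obtain j n h' where p': "p' = ((j, n), h')" by (cases p') auto
    with False Y have "j = 0" "n \<le> t" by (auto dest: left_degree_leD)
    with p' \<open>t < N\<close> \<open>m < N\<close> show ?thesis by (auto simp: bconst_no_wrap)
  qed simp
  have "tmul N (bconst N q u a) c (bas ((m, 0), h)) Y ((m', 0), l) =
      (\<Sum>p'\<in>Idx N \<times> Idx N. if fst p' = (0, 0) \<and> m' = m then Y p' * c h (snd p') l else 0)"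
    using assms by (simp add: tmul_bas_left summand)
  also have "\<dots> = (if m' = m then \<Sum>h'\<in>Idx N. Y ((0, 0), h') * c h h' l else 0)"
  proof (cases "m' = m")
    case True
    thus ?thesis using \<open>m < N\<close> unfolding sum.cartesian_product'
      by (subst sum.swap) (simp add: sum.delta)
  qed simp
  finally show ?thesis .
qed

lemma tmul_bas_left_vx_slice:
  assumes Y: "left_degree_le 0 t Y" and "t + 1 < N" "h \<in> Idx N"
  shows "tmul N (bconst N q u a) c (bas ((0, 1), h)) Y ((0, 0), l) = 0"
proof -
  have "Y p' * bconst N q u a (0, 1) (fst p') (0, 0) = 0" for p'
  proof (cases "Y p' = 0")
    case False
    obtain j n h' where p': "p' = ((j, n), h')" by (cases p') auto
    with False Y have "j = 0" "n \<le> t" by (auto dest: left_degree_leD)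
    with p' \<open>t + 1 < N\<close> show ?thesis by (simp add: bconst_no_wrap)
  qed simp
  thus ?thesis using assms by (simp add: tmul_bas_left)
qed

lemma taft_x_power_left_unit:
  "n < N \<Longrightarrow> taft_x_power N q n ((0, 0), l) = (if l = (0, n) then 1 else 0)"
proof (induction n arbitrary: l)
  case 0
  thus ?case by (simp add: taft_x_power_def bas_def)
next
  case (Suc n)
  let ?Y = "taft_x_power N q n :: _ \<Rightarrow> 'a"
  have Y: "left_degree_le 0 n ?Y" using Suc.prems by (intro left_degree_le_taft_x_power) simp
  have "taft_x_power N q (Suc n) ((0, 0), l) =
      comod_mul N q (taft_const N q) (bas ((0, 0), (0, 1))) ?Y ((0, 0), l) +
      comod_mul N q (taft_const N q) (bas ((0, 1), (1, 0))) ?Y ((0, 0), l)"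
    by (simp add: taft_x_power_def tmul_add_left)
  also have "\<dots> = (\<Sum>h'\<in>Idx N. ?Y ((0, 0), h') * taft_const N q (0, 1) h' l)"
    using Suc.prems tmul_bas_left_slice[OF Y, where m = 0 and h = "(0, 1)" and m' = 0 and u = 1 and a = 0]
      tmul_bas_left_vx_slice[OF Y, where h = "(1, 0)" and u = 1 and a = 0] by simp
  also have "\<dots> = taft_const N q (0, 1) (0, n) l"
    using Suc by (simp add: if_distrib[of "\<lambda>x. x * _"] sum.delta cong: if_cong)
  also have "\<dots> = (if l = (0, Suc n) then 1 else 0)"
    using Suc.prems by (simp add: bconst_no_wrap)
  finally show ?case .
qed

lemma gen_coact_basis:
  assumes "(m, n) \<in> Idx N"
  shows "gen_coact N q (bconst N q u a) (m, n) =
    comod_mul N q (taft_const N q) (bas ((m, 0), (m, 0))) (taft_x_power N q n)"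
proof -
  have "m < N" "n < N" using assms by auto
  thus ?thesis
    unfolding gen_coact_unfold fst_conv snd_conv coact_vg_power[OF \<open>m < N\<close>]
      coact_vx_power[OF \<open>n < N\<close>]
    by (intro tmul_bconst_cong[OF left_degree_le_bas[OF order_refl order_refl]
        left_degree_le_taft_x_power]) auto
qed

lemma gen_coact_eq_taft_Delta:
  "i \<in> Idx N \<Longrightarrow> gen_coact N q (bconst N q u a) i = taft_Delta N q i"
  by (cases i) (simp add: taft_Delta_def gen_coact_basis)

lemma taft_Delta_support:
  assumes "N > 0" "taft_Delta N q i (k, l) \<noteq> 0"
  shows "k \<in> Idx N"
  using assms unfolding taft_Delta_def gen_coact_unfold by (rule tmul_bconst_nonzero_in_Idx)

lemma taft_Delta_g:
  assumes "N \<ge> 2"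
  shows "taft_Delta N q (1, 0) = coact_vg"
proof (rule ext, clarify)
  fix k l :: "nat \<times> nat"
  have Idx: "((1, 0), (1, 0)) \<in> Idx N \<times> Idx N" "((0, 0), (0, 0)) \<in> Idx N \<times> Idx N"
    using assms by auto
  have "taft_Delta N q (1, 0) (k, l) = comod_mul N q (taft_const N q) coact_vg tensor_one (k, l)"
    using assms by (simp add: taft_Delta_def gen_coact_basis taft_x_power_def)
  also have "\<dots> = taft_const N q (1, 0) (0, 0) k * taft_const N q (1, 0) (0, 0) l"
    using tmul_bas_bas[OF Idx] by simp
  also have "\<dots> = coact_vg (k, l)"
    using assms by (simp add: bconst_no_wrap bas_def)
  finally show "taft_Delta N q (1, 0) (k, l) = coact_vg (k, l)" .
qed

lemma taft_Delta_left_vg: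
  assumes "(m, n) \<in> Idx N"
  shows "taft_Delta N q (m, n) ((m', 0), l) = (if m' = m \<and> l = (m, n) then 1 else 0)"
proof -
  have "m < N" "n < N" using assms by auto
  hence "taft_Delta N q (m, n) ((m', 0), l) =
      (if m' = m then \<Sum>h'\<in>Idx N. taft_x_power N q n ((0, 0), h') * taft_const N q (m, 0) h' l else 0)"
    unfolding taft_Delta_def gen_coact_basis[OF assms]
    by (intro tmul_bas_left_slice[OF left_degree_le_taft_x_power[OF \<open>n < N\<close>]]) auto
  also have "\<dots> = (if m' = m then taft_const N q (m, 0) (0, n) l else 0)"
    using \<open>n < N\<close> by (simp add: taft_x_power_left_unit if_distrib[of "\<lambda>x. x * _"] sum.delta cong: if_cong)
  also have "\<dots> = (if m' = m \<and> l = (m, n) then 1 else 0)"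
    using \<open>m < N\<close> \<open>n < N\<close> by (simp add: bconst_no_wrap)
  finally show ?thesis .
qed

section \<open>Comodule maps\<close>

lemma comod_map_group_like:
  assumes N: "N \<ge> 2" and psi: "comod_map N q u a psi"
  shows "psi (1, 0) = (\<lambda>k. psi (1, 0) (1, 0) * bas (1, 0) k)"
proof
  fix k
  show "psi (1, 0) k = psi (1, 0) (1, 0) * bas (1, 0) k"
  proof (cases "k = (1, 0) \<or> k \<notin> Idx N")
    case True
    thus ?thesis using psi unfolding comod_map_def by (cases k) (auto simp: bas_def)
  next
    case False
    then obtain m' n' where k: "k = (m', n')" "k \<in> Idx N" "k \<noteq> (1, 0)" by (cases k) auto
    \<comment> \<open>compare the coefficients of \<open>v\<^sub>g\<^bsup>m'\<^esup> \<otimes> g\<^bsup>m'\<^esup>x\<^bsup>n'\<^esup>\<close> in \<open>\<delta>(\<psi> g) = \<psi> g \<otimes> g\<close>\<close>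
    have "(1, 0) \<in> Idx N" using N by simp
    hence "B_coact N q u a (psi (1, 0)) ((m', 0), k) =
        (\<Sum>j\<in>Idx N. taft_Delta N q (1, 0) (j, k) * psi j (m', 0))"
      using psi unfolding comod_map_def by auto
    also have "\<dots> = (\<Sum>j\<in>Idx N. coact_vg (j, k) * psi j (m', 0))"
      by (simp only: taft_Delta_g[OF N])
    also have "\<dots> = 0" using k by (intro sum.neutral) (auto simp: bas_def)
    finally have "B_coact N q u a (psi (1, 0)) ((m', 0), k) = 0" .
    moreover have "B_coact N q u a (psi (1, 0)) ((m', 0), k) = psi (1, 0) k"
    proof -
      have "B_coact N q u a (psi (1, 0)) ((m', 0), k) =
          (\<Sum>i\<in>Idx N. psi (1, 0) i * taft_Delta N q i ((m', 0), k))"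
        unfolding B_coact_def by (intro sum.cong refl) (simp add: gen_coact_eq_taft_Delta)
      also have "\<dots> = (\<Sum>i\<in>Idx N. if i = k then psi (1, 0) i else 0)"
        by (intro sum.cong refl) (auto simp: taft_Delta_left_vg k(1) split: if_splits)
      finally show ?thesis using k(2) by (simp add: sum.delta)
    qed
    ultimately show ?thesis using k(3) by (simp add: bas_def)
  qed
qed

definition basis_map :: "nat \<Rightarrow> nat \<times> nat \<Rightarrow> nat \<times> nat \<Rightarrow> 'a::comm_ring_1" where
  "basis_map N j = (if j \<in> Idx N then bas j else (\<lambda>_. 0))"

lemma comod_map_basis_map:
  assumes N: "N \<ge> 2"
  shows "comod_map N q u a (basis_map N)"
  unfolding comod_map_def
proof (intro conjI allI impI ballI)
  fix j k :: "nat \<times> nat"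
  assume "k \<notin> Idx N"
  thus "basis_map N j k = 0" by (auto simp: basis_map_def bas_def)
next
  fix i assume i: "i \<in> Idx N"
  show "B_coact N q u a (basis_map N i) = (\<lambda>(k, l). \<Sum>j\<in>Idx N. taft_Delta N q i (j, l) * basis_map N j k)"
  proof (rule ext, clarify)
    fix k l :: "nat \<times> nat"
    have "B_coact N q u a (basis_map N i) (k, l) = taft_Delta N q i (k, l)"
      using i by (simp add: B_coact_def basis_map_def gen_coact_eq_taft_Delta sum_bas_mult)
    also have "\<dots> = (\<Sum>j\<in>Idx N. taft_Delta N q i (j, l) * basis_map N j k)"
      using taft_Delta_support[of N q i k l] N
      by (auto simp: basis_map_def bas_def if_distrib[of "\<lambda>x. _ * x"] sum.delta cong: if_cong)
    finally show "B_coact N q u a (basis_map N i) (k, l) = (\<Sum>j\<in>Idx N. taft_Delta N q i (j, l) * basis_map N j k)" .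
  qed
qed

lemma algmul_bas_bas:
  assumes "i \<in> Idx N" "j \<in> Idx N"
  shows "algmul N c (\<lambda>k. x * bas i k) (\<lambda>k. y * bas j k) = (\<lambda>k. x * y * c i j k)"
proof
  fix k
  have "algmul N c (\<lambda>k. x * bas i k) (\<lambda>k. y * bas j k) k =
      (\<Sum>i'\<in>Idx N. bas i i' * (\<Sum>j'\<in>Idx N. bas j j' * (x * y * c i' j' k)))"
    unfolding algmul_def by (simp add: sum_distrib_left ac_simps)
  thus "algmul N c (\<lambda>k. x * bas i k) (\<lambda>k. y * bas j k) k = x * y * c i j k"
    using assms by (simp add: sum_bas_mult)
qed

lemma power_vg:
  assumes N: "N \<ge> 2"
  shows "(algmul N (bconst N q u a) (\<lambda>k. r * bas (1, 0) k) ^^ n) (bas (0, 0)) =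
    (\<lambda>k. r ^ n * u ^ (n div N) * bas (n mod N, 0) k)"
proof (induction n)
  case (Suc n)
  define j where "j = n mod N"
  have "j < N" using N by (simp add: j_def)
  have "N \<noteq> 0" using N by simp
  have "Suc n = Suc j + N * (n div N)" by (simp add: j_def)
  hence div: "Suc n div N = n div N + Suc j div N" by (simp only: div_mult_self2[OF \<open>N \<noteq> 0\<close>])
  have mod: "Suc j mod N = Suc n mod N" by (simp add: mod_Suc_eq j_def)
  have "(algmul N (bconst N q u a) (\<lambda>k. r * bas (1, 0) k) ^^ Suc n) (bas (0, 0)) =
      algmul N (bconst N q u a) (\<lambda>k. r * bas (1, 0) k) (\<lambda>k. r ^ n * u ^ (n div N) * bas (j, 0) k)"
    unfolding j_def by (simp only: funpow.simps comp_apply Suc.IH)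
  also have "\<dots> = (\<lambda>k. r * (r ^ n * u ^ (n div N)) * bconst N q u a (1, 0) (j, 0) k)"
    using N \<open>j < N\<close> by (intro algmul_bas_bas) auto
  also have "\<dots> = (\<lambda>k. r ^ Suc n * u ^ (Suc n div N) * bas (Suc n mod N, 0) k)"
    using div mod \<open>j < N\<close> by (auto simp: bconst_def bas_def power_add)
  finally show ?case .
qed (simp add: bas_def)

section \<open>A polynomial identity of \<open>\<B>\<^bsub>(u,a)\<^esub>\<close>\<close>

definition vg_word :: "nat \<Rightarrow> (nat \<times> (nat \<times> nat)) list" where
  "vg_word n = replicate n (1, (1, 0))"

definition word_binomial :: "'w \<Rightarrow> 'w \<Rightarrow> 'a::comm_ring_1 \<Rightarrow> 'w \<Rightarrow> 'a" where
  "word_binomial w w' c = (\<lambda>v. (if v = w then 1 else 0) - (if v = w' then c else 0))"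

lemma T_eval_word_binomial:
  assumes "w \<noteq> w'"
  shows "T_eval N c phi (word_binomial w w' c') =
    (\<lambda>k. word_val N c phi w k - c' * word_val N c phi w' k)"
proof
  fix k
  have "{v. word_binomial w w' c' v \<noteq> 0} \<subseteq> {w, w'}" by (auto simp: word_binomial_def)
  hence "T_eval N c phi (word_binomial w w' c') k =
      (\<Sum>v\<in>{w, w'}. word_binomial w w' c' v * word_val N c phi v k)"
    unfolding T_eval_def by (intro sum.mono_neutral_left) auto
  thus "T_eval N c phi (word_binomial w w' c') k = word_val N c phi w k - c' * word_val N c phi w' k"
    using assms by (simp add: word_binomial_def)
qed

lemma word_binomial_vg_word_in_T_carrier:
  "N \<ge> 2 \<Longrightarrow> word_binomial (vg_word n) (vg_word n') c \<in> T_carrier N"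
  unfolding T_carrier_def
  by (auto simp: word_binomial_def vg_word_def intro: finite_subset[of _ "{vg_word n, vg_word n'}"])

lemma word_val_vg_word:
  assumes "N \<ge> 2" "phi 1 (1, 0) = (\<lambda>k. r * bas (1, 0) k)"
  shows "word_val N (bconst N q u a) phi (vg_word n) = (\<lambda>k. r ^ n * u ^ (n div N) * bas (n mod N, 0) k)"
  using assms power_vg[OF assms(1)] by (simp add: word_val_def vg_word_def)

lemma vg_binomial_in_taft_Id:
  fixes u :: "'a::comm_ring_1"
  assumes N: "N \<ge> 2" and "N dvd n" "N dvd e" "e > 0"
    and periodic: "\<And>r::'a. r ^ (n + e) = r ^ n"
  shows "word_binomial (vg_word (n + e)) (vg_word n) (u ^ (e div N)) \<in> taft_Id N q u a"
  unfolding taft_Id_def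
proof (intro CollectI conjI word_binomial_vg_word_in_T_carrier[OF N] allI impI)
  fix phi :: "nat \<Rightarrow> nat \<times> nat \<Rightarrow> nat \<times> nat \<Rightarrow> 'a"
  assume "\<forall>i. comod_map N q u a (phi i)"
  hence phi: "phi 1 (1, 0) = (\<lambda>k. phi 1 (1, 0) (1, 0) * bas (1, 0) k)"
    using comod_map_group_like[OF N] by blast
  have "vg_word (n + e) \<noteq> vg_word n" using \<open>e > 0\<close> by (simp add: vg_word_def)
  moreover have "u ^ ((n + e) div N) = u ^ (n div N) * u ^ (e div N)" "(n + e) mod N = 0" "n mod N = 0"
    using \<open>N dvd n\<close> \<open>N dvd e\<close> by (auto simp: power_add)
  ultimately show "T_eval N (bconst N q u a) phi (word_binomial (vg_word (n + e)) (vg_word n) (u ^ (e div N))) =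
      (\<lambda>_. 0)"
    by (simp add: T_eval_word_binomial word_val_vg_word[where phi = phi, OF N phi] periodic mult_ac)
qed

lemma power_eq_if_vg_binomial_in_taft_Id:
  fixes u' :: "'a::comm_ring_1"
  assumes N: "N \<ge> 2" and "N dvd n" "N dvd e" "e > 0" and "u' dvd 1"
    and "word_binomial (vg_word (n + e)) (vg_word n) c \<in> taft_Id N q u' a'"
  shows "u' ^ (e div N) = c"
proof -
  let ?P = "word_binomial (vg_word (n + e)) (vg_word n) c"
  have "\<forall>phi. (\<forall>i. comod_map N q u' a' (phi i)) \<longrightarrow> T_eval N (bconst N q u' a') phi ?P = (\<lambda>_. 0)"
    using assms(6) unfolding taft_Id_def by blast
  hence "T_eval N (bconst N q u' a') (\<lambda>_. basis_map N) ?P = (\<lambda>_. 0)"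
    by (rule allE[where x = "\<lambda>_. basis_map N"]) (simp add: comod_map_basis_map[OF N])
  hence "T_eval N (bconst N q u' a') (\<lambda>_. basis_map N) ?P (0, 0) = 0" by simp
  moreover have "(\<lambda>_. basis_map N) 1 (1, 0) = (\<lambda>k. 1 * bas (1, 0) k)"
    using N by (simp add: basis_map_def)
  note word_val = word_val_vg_word[where phi = "\<lambda>_. basis_map N", OF N this]
  moreover have "vg_word (n + e) \<noteq> vg_word n" using \<open>e > 0\<close> by (simp add: vg_word_def)
  moreover have "u' ^ ((n + e) div N) = u' ^ (n div N) * u' ^ (e div N)" "(n + e) mod N = 0" "n mod N = 0"
    using \<open>N dvd n\<close> \<open>N dvd e\<close> by (auto simp: power_add)
  ultimately have "u' ^ (n div N) * u' ^ (e div N) = u' ^ (n div N) * c"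
    by (simp add: T_eval_word_binomial word_val bas_def mult.commute)
  moreover have "u' ^ (n div N) dvd 1" using dvd_power_same[OF \<open>u' dvd 1\<close>] by simp
  ultimately show ?thesis by (metis unit_mult_left_cancel_comm)
qed

theorem proposition3p6:
  fixes q u u' a a' :: "'a::{comm_ring_1,finite}" and N :: nat
  assumes "N \<ge> 2"
    and "of_nat N dvd (1::'a)"
    and "poly (map_poly of_int (cyclotomic N)) q = 0"
    and "u dvd 1" and "u' dvd 1"
    and "taft_Id N q u a = taft_Id N q u' a'"
  shows "u' ^ (unit_exponent TYPE('a) div N) = u ^ (unit_exponent TYPE('a) div N)"
proof (cases "(0::'a) = 1")
  case True
  thus ?thesis by (metis mult_1_right mult_zero_right)
next
  case False
  let ?\<alpha> = "unit_exponent TYPE('a)" and ?C = "card (UNIV :: 'a set)"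
  have "N dvd ?\<alpha>"
    using assms(1-3) False by (intro dvd_unit_exponent_if_cyclotomic_root) auto
  define n where "n = N * (?C * ?C)"
  have "N dvd n" "?C * ?C \<le> n" using assms(1) by (auto simp: n_def)
  hence "word_binomial (vg_word (n + ?\<alpha>)) (vg_word n) (u ^ (?\<alpha> div N)) \<in> taft_Id N q u a"
    using assms(1) \<open>N dvd ?\<alpha>\<close> unit_exponent_pos power_add_unit_exponent
    by (intro vg_binomial_in_taft_Id) auto
  thus ?thesis
    using assms(1,5,6) \<open>N dvd n\<close> \<open>N dvd ?\<alpha>\<close> unit_exponent_pos
    by (intro power_eq_if_vg_binomial_in_taft_Id[where q = q and a' = a']) auto
qed

end
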